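(* Let $n\ge 3$. Consider the $n^2$-puzzle: the $n\times n$ grid graph with $n^2$ distinct robots, one occupying each vertex. Then any two states of the $n^2$-puzzle are connected via legal moves, i.e., from any assignment of the robots to the vertices one can reach any other such assignment by a finite sequence of legal moves.
   Context: A state is a bijection between the set of robots and the vertex set of the grid. A legal move (one time step) takes a state to another state such that each robot either stays at its vertex or moves to an adjacent vertex, no two robots end at the same vertex, and no two robots traverse the same edge in opposite directions (swap). Several robots may move simultaneously; since every vertex is occupied, the moving robots move synchronously along one or more vertex-disjoint cycles of the grid. *)

theory Defs
  imports Main
begin

definition grid :: "nat \<Rightarrow> (nat \<times> nat) set" where
  "grid n = {0..<n} \<times> {0..<n}"

definition grid_adj :: "nat \<times> nat \<Rightarrow> nat \<times> nat \<Rightarrow> bool" where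
  "grid_adj u v \<longleftrightarrow>
     (fst u = fst v \<and> (snd u = Suc (snd v) \<or> snd v = Suc (snd u))) \<or>
     (snd u = snd v \<and> (fst u = Suc (fst v) \<or> fst v = Suc (fst u)))"

definition is_state :: "nat \<Rightarrow> ('r \<Rightarrow> nat \<times> nat) \<Rightarrow> bool" where
  "is_state n s \<longleftrightarrow> bij_betw s UNIV (grid n)"

text \<open>One legal time step from state s to state s': every robot stays or moves to an
  adjacent vertex, no two robots end at the same vertex (s' is a state, hence injective),
  and no two robots swap along an edge.\<close>
definition legal_move :: "nat \<Rightarrow> ('r \<Rightarrow> nat \<times> nat) \<Rightarrow> ('r \<Rightarrow> nat \<times> nat) \<Rightarrow> bool" where
  "legal_move n s s' \<longleftrightarrow>
     is_state n s \<and> is_state n s' \<and>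
     (\<forall>r. s' r = s r \<or> grid_adj (s r) (s' r)) \<and>
     (\<forall>r1 r2. r1 \<noteq> r2 \<and> s' r1 = s r2 \<longrightarrow> s' r2 \<noteq> s r1)"

end

theory Submission
  imports Defs "HOL-Combinatorics.Permutations" "HOL-Combinatorics.Cycles"
begin

text \<open>A single legal move can rotate the robots around any cycle of length at least 3 in the
  grid. In a 2 x 3 block, rotating the two unit squares and then the boundary hexagon in the
  opposite sense exchanges the robots on two adjacent vertices; for n \<ge> 3 every edge of the grid
  lies in such a block. Since the grid is connected, the transpositions of adjacent vertices
  generate all transpositions of vertices, hence all permutations of the grid, and any state
  is carried to any other by a permutation.\<close>

lemma grid_adj_sym: "grid_adj u v \<Longrightarrow> grid_adj v u"
  unfolding grid_adj_def by auto

lemma grid_adj_neq: "grid_adj u v \<Longrightarrow> u \<noteq> v"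
  unfolding grid_adj_def by auto

lemma is_state_in_grid: "is_state n s \<Longrightarrow> s r \<in> grid n"
  unfolding is_state_def bij_betw_def by auto

lemma legal_move_is_state: "legal_move n s s' \<Longrightarrow> is_state n s'"
  unfolding legal_move_def by auto

lemma reachable_is_state:
  "(legal_move n)\<^sup>*\<^sup>* s s' \<Longrightarrow> is_state n s \<Longrightarrow> is_state n s'"
  by (induction rule: rtranclp_induct) (auto dest: legal_move_is_state)

lemma legal_move_permute:
  assumes s: "is_state n s" and p: "p permutes grid n"
    and adj: "\<And>v. p v \<noteq> v \<Longrightarrow> grid_adj v (p v)"
    and no_swap: "\<And>v. p v \<noteq> v \<Longrightarrow> p (p v) \<noteq> v"
  shows "legal_move n s (p \<circ> s)"
  unfolding legal_move_def
proof (intro conjI allI impI)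
  show "is_state n (p \<circ> s)"
    using s permutes_imp_bij[OF p] unfolding is_state_def by (rule bij_betw_trans)
  show "(p \<circ> s) r = s r \<or> grid_adj (s r) ((p \<circ> s) r)" for r
    using adj[of "s r"] by auto
  fix r1 r2 assume r: "r1 \<noteq> r2 \<and> (p \<circ> s) r1 = s r2"
  then have "p (s r1) \<noteq> s r1"
    using s by (auto simp: is_state_def bij_betw_def dest: injD)
  then show "(p \<circ> s) r2 \<noteq> s r1"
    using r no_swap[of "s r1"] by auto
qed (fact s)

lemma finite_grid: "finite (grid n)"
  by (simp add: grid_def)

definition grid_cycle :: "(nat \<times> nat) list \<Rightarrow> bool" where
  "grid_cycle cs \<longleftrightarrow> distinct cs \<and> 3 \<le> length cs \<and> list_all2 grid_adj cs (rotate1 cs)"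

lemma legal_move_cycle:
  assumes s: "is_state n s" and cs: "grid_cycle cs" "set cs \<subseteq> grid n"
  shows "legal_move n s (cycle_of_list cs \<circ> s)"
proof (rule legal_move_permute[OF s])
  let ?p = "cycle_of_list cs"
  have dist: "distinct cs" and len: "3 \<le> length cs" and adj: "list_all2 grid_adj cs (rotate1 cs)"
    using cs(1) by (auto simp: grid_cycle_def)
  show "?p permutes grid n"
    using cycle_permutes cs(2) by (rule permutes_subset)
  have moved: "v \<in> set cs" if "?p v \<noteq> v" for v
    using that id_outside_supp by metis
  have "list_all2 grid_adj cs (map ?p cs)"
    using adj cyclic_rotation[OF dist, of 1] by simp
  then show "grid_adj v (?p v)" if "?p v \<noteq> v" for v
    using moved[OF that] by (simp add: list_all2_map2 list_all2_same)
  show "?p (?p v) \<noteq> v" if v: "?p v \<noteq> v" for v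
  proof -
    obtain i where i: "i < length cs" "v = cs ! i"
      using moved[OF v] by (auto simp: in_set_conv_nth)
    have "?p (?p v) = cs ! ((2 + i) mod length cs)"
      using cyclic_rotation[OF dist, of 2] i
      by (metis funpow_0 funpow_Suc_right numeral_2_eq_2 o_apply nth_map nth_rotate)
    moreover have "(2 + i) mod length cs \<noteq> i"
      using i len by (cases "2 + i < length cs") (auto simp: mod_if)
    moreover have "0 < length cs"
      using len by linarith
    ultimately show ?thesis
      using i by (simp add: nth_eq_iff_index_eq[OF dist])
  qed
qed

text \<open>The \<open>itself\<close> argument only fixes the type of robots.\<close>
definition realizable :: "'r itself \<Rightarrow> nat \<Rightarrow> (nat \<times> nat \<Rightarrow> nat \<times> nat) \<Rightarrow> bool" where
  "realizable R n p \<longleftrightarrow> (\<forall>s :: 'r \<Rightarrow> nat \<times> nat. is_state n s \<longrightarrow> (legal_move n)\<^sup>*\<^sup>* s (p \<circ> s))"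

lemma realizable_id: "realizable R n id"
  by (simp add: realizable_def)

lemma realizable_comp:
  assumes "realizable R n p" "realizable R n q"
  shows "realizable R n (q \<circ> p)"
  unfolding realizable_def
proof (intro allI impI)
  fix s :: "'a \<Rightarrow> nat \<times> nat" assume s: "is_state n s"
  have "(legal_move n)\<^sup>*\<^sup>* s (p \<circ> s)"
    using assms(1) s by (simp add: realizable_def)
  moreover have "(legal_move n)\<^sup>*\<^sup>* (p \<circ> s) (q \<circ> (p \<circ> s))"
    using assms(2) reachable_is_state[OF calculation s] by (simp add: realizable_def)
  ultimately show "(legal_move n)\<^sup>*\<^sup>* s (q \<circ> p \<circ> s)"
    by (simp add: comp_assoc)
qed

lemma realizable_cycle:
  "grid_cycle cs \<Longrightarrow> set cs \<subseteq> grid n \<Longrightarrow> realizable R n (cycle_of_list cs)"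
  by (auto simp: realizable_def intro: legal_move_cycle)

lemma realizable_permutes:
  assumes p: "p permutes grid n"
    and swaps: "\<And>u v. u \<in> grid n \<Longrightarrow> v \<in> grid n \<Longrightarrow> realizable R n (transpose u v)"
  shows "realizable R n p"
  using p finite_grid
proof (induction p rule: permutes_induct)
  case (swap a b p)
  then show ?case using swaps realizable_comp by blast
qed (rule realizable_id)

lemma realizable_transpose_trans:
  assumes "realizable R n (transpose u w)" "realizable R n (transpose w v)"
    and "u \<noteq> v" "w \<noteq> v"
  shows "realizable R n (transpose u v)"
proof -
  have "transpose u v = transpose u w \<circ> transpose w v \<circ> transpose u w"
    using assms(3,4) by (simp add: transpose_comp_triple)
  then show ?thesis using assms(1,2) by (simp add: realizable_comp)
qed

text \<open>The vertices of a ladder form the block \<open>a b c\<close> over \<open>d e f\<close>.\<close>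
definition ladder :: "nat \<times> nat \<Rightarrow> nat \<times> nat \<Rightarrow> nat \<times> nat \<Rightarrow> nat \<times> nat \<Rightarrow> nat \<times> nat \<Rightarrow> nat \<times> nat \<Rightarrow> bool" where
  "ladder a b c d e f \<longleftrightarrow> distinct [a, b, c, d, e, f] \<and>
     grid_adj a b \<and> grid_adj b c \<and> grid_adj d e \<and> grid_adj e f \<and>
     grid_adj a d \<and> grid_adj b e \<and> grid_adj c f"

lemma ladder_cycles_eq_transpose:
  assumes "distinct [a, b, c, d, e, f]"
  shows "cycle_of_list [d, e, f, c, b, a] \<circ> cycle_of_list [b, c, f, e] \<circ> cycle_of_list [a, b, e, d]
    = transpose a b"
proof
  fix v
  have "v = a \<or> v = b \<or> v = c \<or> v = d \<or> v = e \<or> v = f \<or> v \<notin> {a, b, c, d, e, f}"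
    by blast
  then show "(cycle_of_list [d, e, f, c, b, a] \<circ> cycle_of_list [b, c, f, e]
      \<circ> cycle_of_list [a, b, e, d]) v = transpose a b v"
    using assms by (elim disjE) auto
qed

lemma realizable_ladder_transpose:
  assumes l: "ladder a b c d e f" and g: "{a, b, c, d, e, f} \<subseteq> grid n"
  shows "realizable R n (transpose a b)"
proof -
  have "grid_cycle [a, b, e, d]" "grid_cycle [b, c, f, e]" "grid_cycle [d, e, f, c, b, a]"
    using l by (auto simp: ladder_def grid_cycle_def intro: grid_adj_sym)
  then have "realizable R n (cycle_of_list [d, e, f, c, b, a] \<circ> cycle_of_list [b, c, f, e]
      \<circ> cycle_of_list [a, b, e, d])"
    using g by (intro realizable_comp realizable_cycle) auto
  moreover have "distinct [a, b, c, d, e, f]"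
    using l by (simp add: ladder_def)
  ultimately show ?thesis
    by (simp only: ladder_cycles_eq_transpose)
qed

lemma ladder_swap:
  assumes "ladder a b c d e f"
  shows "ladder (prod.swap a) (prod.swap b) (prod.swap c) (prod.swap d) (prod.swap e) (prod.swap f)"
proof -
  have "grid_adj (prod.swap u) (prod.swap v) \<longleftrightarrow> grid_adj u v" for u v :: "nat \<times> nat"
    unfolding grid_adj_def by auto
  moreover have "prod.swap u = prod.swap v \<longleftrightarrow> u = v" for u v :: "nat \<times> nat"
    by (metis swap_swap)
  ultimately show ?thesis
    using assms by (simp add: ladder_def)
qed

lemma swap_in_grid_iff: "prod.swap u \<in> grid n \<longleftrightarrow> u \<in> grid n"
  by (cases u) (auto simp: grid_def)

lemma horizontal_edge_in_ladder:
  assumes n: "3 \<le> n" and ij: "i < n" "j + 1 < n"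
  obtains a b c d e f where "{a, b} = {(i, j), (i, j + 1)}" "ladder a b c d e f"
    "{a, b, c, d, e, f} \<subseteq> grid n"
proof -
  define i' where "i' = (if i + 1 < n then i + 1 else i - 1)"
  have i': "i' < n" "i = Suc i' \<or> i' = Suc i"
    using n ij by (auto simp: i'_def)
  show ?thesis
  proof (cases "j + 2 < n")
    case True
    show ?thesis
      by (rule that[of "(i, j)" "(i, j + 1)" "(i, j + 2)" "(i', j)" "(i', j + 1)" "(i', j + 2)"])
        (use ij i' True in \<open>auto simp: ladder_def grid_adj_def grid_def\<close>)
  next
    case False
    then obtain k where k: "j = Suc k"
      using n ij by (cases j) auto
    show ?thesis
      by (rule that[of "(i, j + 1)" "(i, j)" "(i, k)" "(i', j + 1)" "(i', j)" "(i', k)"])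
        (use ij i' k in \<open>auto simp: ladder_def grid_adj_def grid_def\<close>)
  qed
qed

lemma realizable_adjacent_transpose:
  assumes n: "3 \<le> n" and uv: "u \<in> grid n" "v \<in> grid n" "grid_adj u v"
  shows "realizable R n (transpose u v)"
proof -
  have horizontal: "realizable R n (transpose (i, j) (i, j + 1))" if ij: "i < n" "j + 1 < n" for i j
  proof -
    obtain a b c d e f where ab: "{a, b} = {(i, j), (i, j + 1)}"
      and l: "ladder a b c d e f" "{a, b, c, d, e, f} \<subseteq> grid n"
      using horizontal_edge_in_ladder[OF n ij] .
    have "realizable R n (transpose a b)"
      using realizable_ladder_transpose[OF l] .
    with ab show ?thesis
      by (auto simp: doubleton_eq_iff transpose_commute)
  qed
  have vertical: "realizable R n (transpose (i, j) (i + 1, j))" if ij: "i + 1 < n" "j < n" for i j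
  proof -
    obtain a b c d e f where ab: "{a, b} = {(j, i), (j, i + 1)}"
      and l: "ladder a b c d e f" "{a, b, c, d, e, f} \<subseteq> grid n"
      using horizontal_edge_in_ladder[OF n ij(2,1)] .
    have "realizable R n (transpose (prod.swap a) (prod.swap b))"
      using l by (intro realizable_ladder_transpose[OF ladder_swap]) (auto simp: swap_in_grid_iff)
    with ab show ?thesis
      by (auto simp: doubleton_eq_iff transpose_commute)
  qed
  obtain i j i' j' where u: "u = (i, j)" and v: "v = (i', j')"
    by fastforce
  from uv(3) consider "i = i'" "j' = Suc j" | "i = i'" "j = Suc j'" | "j = j'" "i' = Suc i" | "j = j'" "i = Suc i'"
    unfolding grid_adj_def u v by auto
  then show ?thesis
    using uv(1,2) horizontal vertical unfolding u v grid_def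
    by cases (auto simp: transpose_commute)
qed

definition grid_edge :: "nat \<Rightarrow> nat \<times> nat \<Rightarrow> nat \<times> nat \<Rightarrow> bool" where
  "grid_edge n u v \<longleftrightarrow> u \<in> grid n \<and> v \<in> grid n \<and> grid_adj u v"

lemma grid_edge_from_origin:
  assumes "(i, j) \<in> grid n"
  shows "(grid_edge n)\<^sup>*\<^sup>* (0, 0) (i, j)"
proof -
  have i: "i < n" and j: "j < n"
    using assms by (auto simp: grid_def)
  have "(grid_edge n)\<^sup>*\<^sup>* (0, 0) (k, 0)" if "k < n" for k
    using that by (induction k) (auto intro: rtranclp.rtrancl_into_rtrancl
      simp: grid_edge_def grid_def grid_adj_def)
  moreover have "(grid_edge n)\<^sup>*\<^sup>* (i, 0) (i, k)" if "k < n" for k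
    using that by (induction k) (auto intro: rtranclp.rtrancl_into_rtrancl
      simp: grid_edge_def grid_def grid_adj_def i)
  ultimately show ?thesis
    using i j by (meson rtranclp_trans)
qed

lemma grid_connected:
  assumes "u \<in> grid n" "v \<in> grid n"
  shows "(grid_edge n)\<^sup>*\<^sup>* u v"
proof -
  have "symp (grid_edge n)"
    unfolding symp_def grid_edge_def by (auto intro: grid_adj_sym)
  then have "symp (grid_edge n)\<^sup>*\<^sup>*"
    by (rule symp_rtranclp)
  then show ?thesis
    using assms grid_edge_from_origin by (metis rtranclp_trans surj_pair sympD)
qed

lemma realizable_transpose:
  assumes n: "3 \<le> n" and uv: "u \<in> grid n" "v \<in> grid n"
  shows "realizable R n (transpose u v)"
  using grid_connected[OF uv]
proof (induction rule: rtranclp_induct)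
  case base
  show ?case by (simp add: realizable_def comp_def)
next
  case (step w v)
  then have "realizable R n (transpose w v)" "w \<noteq> v"
    using realizable_adjacent_transpose[OF n] grid_adj_neq unfolding grid_edge_def by blast+
  show ?case
  proof (cases "u = v")
    case True
    then show ?thesis by (simp add: realizable_def comp_def)
  next
    case False
    with \<open>realizable R n (transpose w v)\<close> \<open>w \<noteq> v\<close> step.IH show ?thesis
      by (blast intro: realizable_transpose_trans)
  qed
qed

theorem proposition4:
  fixes n :: nat and s t :: "'r::finite \<Rightarrow> nat \<times> nat"
  assumes "n \<ge> 3" and "card (UNIV :: 'r set) = n * n"
    and "is_state n s" and "is_state n t"
  shows "(legal_move n)\<^sup>*\<^sup>* s t"
proof -
  have s: "bij_betw s UNIV (grid n)" and t: "bij_betw t UNIV (grid n)"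
    using assms(3,4) by (auto simp: is_state_def)
  define p where "p v = (if v \<in> grid n then t (inv_into UNIV s v) else v)" for v
  have "bij_betw (t \<circ> inv_into UNIV s) (grid n) (grid n)"
    using bij_betw_inv_into[OF s] t by (rule bij_betw_trans)
  then have "bij_betw p (grid n) (grid n)"
    by (rule bij_betw_cong[THEN iffD1, rotated]) (simp add: p_def)
  then have "p permutes grid n"
    by (rule bij_imp_permutes) (simp add: p_def)
  then have "realizable TYPE('r) n p"
    using realizable_permutes realizable_transpose[OF assms(1)] by blast
  moreover have "p \<circ> s = t"
    using s assms(3) by (intro ext) (simp add: p_def bij_betw_def is_state_in_grid)
  ultimately show ?thesis
    using assms(3) by (auto simp: realizable_def)
qed

end
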